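(* Let $1<\beta\le2$ and set $\mathrm{ei}_\beta(y)=\mathrm{cpr}_\beta(y)-\tfrac12$ for $y\in[0,1]$. Then for all $0\le y<\beta/2$, $$[\mathcal P_\beta\,\mathrm{ei}_\beta](y)=\frac1\beta\,\mathrm{ei}_\beta(y).$$
   Context: $T_\beta(x)=\beta x$ for $0\le x<\tfrac12$, $T_\beta(x)=\beta(x-\tfrac12)$ for $\tfrac12\le x\le1$; $k_n(x)=0$ if $T_\beta^n(x)<\tfrac12$ and $1$ otherwise; $\mathrm{cpr}_\beta(y)=\sum_{n\ge0}k_n(y)2^{-n-1}$. For a function $f$ on $[0,1]$, the operator $\mathcal P_\beta$ is $[\mathcal P_\beta f](y)=\frac1\beta\left[f\!\left(\frac y\beta\right)+f\!\left(\frac y\beta+\frac12\right)\right]$, $0\le y\le\beta/2$. *)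

theory Defs
  imports "HOL-Analysis.Analysis"
begin

definition T :: "real \<Rightarrow> real \<Rightarrow> real" where
  "T \<beta> x = (if x < 1/2 then \<beta> * x else \<beta> * (x - 1/2))"

definition kdig :: "real \<Rightarrow> nat \<Rightarrow> real \<Rightarrow> real" where
  "kdig \<beta> n x = (if (T \<beta> ^^ n) x < 1/2 then 0 else 1)"

definition cpr :: "real \<Rightarrow> real \<Rightarrow> real" where
  "cpr \<beta> y = (\<Sum>n. kdig \<beta> n y * (1/2) ^ (n+1))"

definition ei :: "real \<Rightarrow> real \<Rightarrow> real" where
  "ei \<beta> y = cpr \<beta> y - 1/2"

definition Pop :: "real \<Rightarrow> (real \<Rightarrow> real) \<Rightarrow> real \<Rightarrow> real" where
  "Pop \<beta> f y = (1/\<beta>) * (f (y/\<beta>) + f (y/\<beta> + 1/2))"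

end

theory Submission
  imports Defs
begin

text \<open>Both preimages y/\<beta> and y/\<beta> + 1/2 of y under T_\<beta> have y as image, and their first
  digits are 0 and 1. Shifting the digit expansion by one step gives
  cpr x = k_0(x)/2 + cpr(T x)/2, so the two terms of the transfer operator add up to
  (0 + 1)/2 + cpr y, which is ei y + 1.\<close>

lemma summable_kdig: "summable (\<lambda>n. kdig \<beta> n x * (1/2::real) ^ (n+1))"
proof (rule summable_comparison_test)
  show "\<exists>N. \<forall>n\<ge>N. norm (kdig \<beta> n x * (1/2::real) ^ (n+1)) \<le> (1/2) ^ (n+1)"
    by (auto simp: kdig_def)
  show "summable (\<lambda>n. (1/2::real) ^ (n+1))"
    using summable_geometric[of "1/2::real"] by (simp add: summable_mult2 power_Suc2)
qed

lemma kdig_Suc: "kdig \<beta> (Suc n) x = kdig \<beta> n (T \<beta> x)"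
  by (simp only: kdig_def funpow_Suc_right comp_apply)

lemma cpr_unfold: "cpr \<beta> x = kdig \<beta> 0 x / 2 + cpr \<beta> (T \<beta> x) / 2"
proof -
  have "cpr \<beta> x = kdig \<beta> 0 x / 2 + (\<Sum>n. kdig \<beta> (Suc n) x * (1/2::real) ^ (Suc n + 1))"
    unfolding cpr_def using suminf_split_head[OF summable_kdig] by simp
  also have "(\<Sum>n. kdig \<beta> (Suc n) x * (1/2::real) ^ (Suc n + 1))
           = (\<Sum>n. kdig \<beta> n (T \<beta> x) * (1/2::real) ^ (n + 1) / 2)"
    by (simp add: kdig_Suc)
  also have "\<dots> = cpr \<beta> (T \<beta> x) / 2"
    unfolding cpr_def by (rule suminf_divide[OF summable_kdig])
  finally show ?thesis .
qed

lemma
  assumes "0 < \<beta>" and "0 \<le> y" and "y < \<beta>/2"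
  shows T_left_preimage: "T \<beta> (y/\<beta>) = y"
    and T_right_preimage: "T \<beta> (y/\<beta> + 1/2) = y"
    and kdig_left_preimage: "kdig \<beta> 0 (y/\<beta>) = 0"
    and kdig_right_preimage: "kdig \<beta> 0 (y/\<beta> + 1/2) = 1"
proof -
  have "0 \<le> y/\<beta>" and left: "y/\<beta> < 1/2"
    using assms by (simp_all add: field_simps)
  then have right: "\<not> y/\<beta> + 1/2 < 1/2"
    by linarith
  show "T \<beta> (y/\<beta>) = y" "kdig \<beta> 0 (y/\<beta>) = 0"
    using left assms(1) by (simp_all add: T_def kdig_def)
  show "T \<beta> (y/\<beta> + 1/2) = y" "kdig \<beta> 0 (y/\<beta> + 1/2) = 1"
    using right assms(1) by (simp_all only: T_def kdig_def if_False funpow_0) simp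
qed

theorem mainTheorem6:
  fixes \<beta> y :: real
  assumes "1 < \<beta>" and "\<beta> \<le> 2" and "0 \<le> y" and "y < \<beta>/2"
  shows "Pop \<beta> (ei \<beta>) y = (1/\<beta>) * ei \<beta> y"
proof -
  have "0 < \<beta>" using assms(1) by simp
  note preimages = T_left_preimage T_right_preimage kdig_left_preimage kdig_right_preimage
  show ?thesis
    unfolding Pop_def ei_def
      cpr_unfold[of \<beta> "y/\<beta>"] cpr_unfold[of \<beta> "y/\<beta> + 1/2"] preimages[OF \<open>0 < \<beta>\<close> assms(3,4)]
    by (simp add: algebra_simps)
qed

end
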